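(* Let $G\in\mathbb{F}_3^{k\times n}$ be a matrix of rank $k$, let $B\subseteq\mathbb{F}_3^k$ be the set of columns of $G$ and let $C\subseteq\mathbb{F}_3^n$ be the row space of $G$. Then $C$ is a linear trifferent code if and only if $\{\vec 0\}\cup B\cup -B$ is a $2$-blocking set in $\mathbb{F}_3^k$.
   Context: A linear trifferent code is a linear subspace $C\subseteq\mathbb{F}_3^n$ such that for any three distinct $x,y,z\in C$ there is a coordinate $i$ with $\{x_i,y_i,z_i\}=\mathbb{F}_3$. A $2$-blocking set in $\mathbb{F}_3^k$ is a set of points meeting every affine subspace (translate of a vector subspace) of dimension $k-2$. *)

theory Defs
  imports "Jordan_Normal_Form.DL_Rank"
begin

text \<open>Vectors of F^n are elements of carrier_vec n (type 'a vec), where the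
  scalar field 'a is any field with exactly three elements (i.e. F_3).\<close>

definition trifferent :: "nat \<Rightarrow> 'a vec set \<Rightarrow> bool" where
  "trifferent n C \<longleftrightarrow>
     (\<forall>x\<in>C. \<forall>y\<in>C. \<forall>z\<in>C. x \<noteq> y \<and> y \<noteq> z \<and> x \<noteq> z \<longrightarrow>
        (\<exists>i<n. {x $ i, y $ i, z $ i} = (UNIV :: 'a set)))"

definition linear_trifferent_code :: "nat \<Rightarrow> 'a::field vec set \<Rightarrow> bool" where
  "linear_trifferent_code n C \<longleftrightarrow>
     subspace class_ring C (module_vec TYPE('a) n) \<and> trifferent n C"

definition lin_subspace_dim :: "nat \<Rightarrow> nat \<Rightarrow> 'a::field vec set \<Rightarrow> bool" where
  "lin_subspace_dim k d W \<longleftrightarrow>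
     subspace class_ring W (module_vec TYPE('a) k) \<and>
     vectorspace.dim class_ring ((module_vec TYPE('a) k)\<lparr>carrier := W\<rparr>) = d"

definition affine_subspace_dim :: "nat \<Rightarrow> nat \<Rightarrow> 'a::field vec set \<Rightarrow> bool" where
  "affine_subspace_dim k d A \<longleftrightarrow>
     (\<exists>a \<in> carrier_vec k. \<exists>W. lin_subspace_dim k d W \<and> A = (\<lambda>w. a + w) ` W)"

text \<open>A 2-blocking set in F^k: meets every affine subspace of dimension k - 2
  (for k < 2 there is no such dimension and the condition is vacuous).\<close>
definition two_blocking_set :: "nat \<Rightarrow> 'a::field vec set \<Rightarrow> bool" where
  "two_blocking_set k S \<longleftrightarrow> S \<subseteq> carrier_vec k \<and>
     (\<forall>d A. d + 2 = k \<and> affine_subspace_dim k d A \<longrightarrow> S \<inter> A \<noteq> {})"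

end

theory Submission
  imports Defs
begin

text \<open>Both sides are equivalent to a property of the set B of columns: for all linearly
  independent x, y in F_3^k some column c has x . c \<noteq> 0 and y . c = 0, i.e. B meets every
  hyperplane ker y outside each codimension-2 subspace ker x \<inter> ker y it contains.

  Code side: three distinct codewords translate to 0, p, q, and over F_3 a coordinate separates
  them iff p_i \<noteq> 0 and p_i + q_i = 0. If p and p + q are dependent then p + q = 0; otherwise
  the property for the independent codewords p, p + q provides the coordinate. Since G has rank k,
  the codeword map y \<mapsto> G^T y is injective, so independent pairs of codewords are exactly the
  images of independent pairs in F_3^k, and (G^T y)_i = y . c_i.

  Blocking side: the affine subspaces of dimension k - 2 are exactly the solution sets
  {z. x . z = \<alpha>, y . z = \<beta>} with x, y independent. Such a set meets {0} \<union> B \<union> -B iff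
  (\<alpha>, \<beta>) = 0 or some column c has (x . c, y . c) = \<plusminus>(\<alpha>, \<beta>), and over F_3 the latter
  means (\<beta> x - \<alpha> y) . c = 0 and (\<alpha> x + \<beta> y) . c \<noteq> 0.\<close>

section \<open>Fields with three elements\<close>

lemma card_3_UNIV_iff_distinct:
  assumes "card (UNIV :: 'a set) = 3"
  shows "{u, v, w :: 'a} = UNIV \<longleftrightarrow> u \<noteq> v \<and> v \<noteq> w \<and> u \<noteq> w"
proof -
  have fin: "finite (UNIV :: 'a set)"
    using assms card.infinite by fastforce
  have "{u, v, w} = UNIV \<longleftrightarrow> card {u, v, w} = 3"
    using assms card_subset_eq[OF fin, of "{u, v, w}"] by auto
  also have "\<dots> \<longleftrightarrow> u \<noteq> v \<and> v \<noteq> w \<and> u \<noteq> w"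
    by (auto simp: card_insert_if)
  finally show ?thesis .
qed

lemma F3_elements:
  assumes "card (UNIV :: 'a::field set) = 3"
  shows "(UNIV :: 'a set) = {0, 1, -1}" and "(1::'a) \<noteq> -1" and "(1::'a) + 1 = -1"
proof -
  obtain a :: 'a where a: "a \<noteq> 0" "a \<noteq> 1"
  proof -
    have "card {0::'a, 1} \<noteq> card (UNIV :: 'a set)" using assms by simp
    then have "{0::'a, 1} \<noteq> UNIV" by metis
    then show thesis using that by blast
  qed
  show one: "(1::'a) \<noteq> -1"
  proof
    assume "(1::'a) = -1"
    then have "a \<noteq> -1" using a(2) by metis
    then have "a + 1 \<noteq> 0" by (simp add: add_eq_0_iff2)
    moreover have "a + 1 \<noteq> 1" using a(1) by simp
    ultimately have "{0, 1, a + 1} = UNIV"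
      using card_3_UNIV_iff_distinct[OF assms] by (metis zero_neq_one)
    then have "a = a + 1" using a by blast
    then show False by simp
  qed
  then show UNIV: "(UNIV :: 'a set) = {0, 1, -1}"
    using card_3_UNIV_iff_distinct[OF assms, of 0 1 "-1"] by simp
  have "(1::'a) + 1 \<noteq> 0" using one by (simp add: add_eq_0_iff2)
  moreover have "(1::'a) + 1 \<noteq> 1" by (metis add_cancel_right_right one_neq_zero)
  ultimately show "(1::'a) + 1 = -1" using UNIV by blast
qed

lemma F3_cases:
  assumes "card (UNIV :: 'a::field set) = 3"
  obtains "(z::'a) = 0" | "z = 1" | "z = -1"
  using F3_elements(1)[OF assms] by blast

lemma F3_third_element:
  assumes F3: "card (UNIV :: 'a::field set) = 3"
    and "a \<noteq> 0" "b \<noteq> 0" "a \<noteq> (b::'a)"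
  shows "a + b = 0"
  using F3_elements(2,3)[OF F3] assms(2-)
  by (cases a rule: F3_cases[OF F3]; cases b rule: F3_cases[OF F3]) simp_all

lemma F3_neq_neg:
  assumes F3: "card (UNIV :: 'a::field set) = 3" and "a \<noteq> (0::'a)"
  shows "a \<noteq> - a"
  using F3_elements(2)[OF F3] assms(2) by (cases a rule: F3_cases[OF F3]) auto

lemma F3_sum_squares_neq_0:
  assumes F3: "card (UNIV :: 'a::field set) = 3"
    and "(\<alpha>, \<beta>) \<noteq> (0::'a, 0::'a)"
  shows "\<alpha> * \<alpha> + \<beta> * \<beta> \<noteq> 0"
  using F3_elements(2,3)[OF F3] assms(2)
  by (cases \<alpha> rule: F3_cases[OF F3]; cases \<beta> rule: F3_cases[OF F3]) simp_all

lemma F3_on_line: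
  assumes F3: "card (UNIV :: 'a::field set) = 3"
    and "\<beta> * X = \<alpha> * Y" and "\<alpha> * X + \<beta> * Y \<noteq> (0::'a)"
  shows "(X = \<alpha> \<and> Y = \<beta>) \<or> (X = - \<alpha> \<and> Y = - \<beta>)"
  using F3_elements(2,3)[OF F3] assms(2-)
  by (cases \<alpha> rule: F3_cases[OF F3]; cases \<beta> rule: F3_cases[OF F3];
      cases X rule: F3_cases[OF F3]; cases Y rule: F3_cases[OF F3]) (simp_all add: algebra_simps)

section \<open>Independent pairs of vectors\<close>

definition independent_pair :: "'a::field vec \<Rightarrow> 'a vec \<Rightarrow> bool" where
  "independent_pair x y \<longleftrightarrow>
     (\<forall>s t. s \<cdot>\<^sub>v x + t \<cdot>\<^sub>v y = 0\<^sub>v (dim_vec x) \<longrightarrow> s = 0 \<and> t = 0)"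

lemma independent_pair_lincomb_neq_0:
  assumes "x \<in> carrier_vec k" and "independent_pair x y" and "(s, t) \<noteq> (0, 0)"
  shows "s \<cdot>\<^sub>v x + t \<cdot>\<^sub>v y \<noteq> 0\<^sub>v k"
  using assms unfolding independent_pair_def by auto

lemma independent_pair_lincomb:
  assumes x: "x \<in> carrier_vec k" and y: "y \<in> carrier_vec k" and ind: "independent_pair x y"
    and det: "a * d - b * c \<noteq> 0"
  shows "independent_pair (a \<cdot>\<^sub>v x + b \<cdot>\<^sub>v y) (c \<cdot>\<^sub>v x + d \<cdot>\<^sub>v y)"
  unfolding independent_pair_def
proof (intro allI impI)
  fix s t
  assume "s \<cdot>\<^sub>v (a \<cdot>\<^sub>v x + b \<cdot>\<^sub>v y) + t \<cdot>\<^sub>v (c \<cdot>\<^sub>v x + d \<cdot>\<^sub>v y)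
    = 0\<^sub>v (dim_vec (a \<cdot>\<^sub>v x + b \<cdot>\<^sub>v y))"
  moreover have "s \<cdot>\<^sub>v (a \<cdot>\<^sub>v x + b \<cdot>\<^sub>v y) + t \<cdot>\<^sub>v (c \<cdot>\<^sub>v x + d \<cdot>\<^sub>v y)
    = (s * a + t * c) \<cdot>\<^sub>v x + (s * b + t * d) \<cdot>\<^sub>v y"
    using x y by (intro eq_vecI) (auto simp: algebra_simps)
  ultimately have "(s * a + t * c) \<cdot>\<^sub>v x + (s * b + t * d) \<cdot>\<^sub>v y = 0\<^sub>v (dim_vec x)"
    using x y by simp
  then have "s * a + t * c = 0" "s * b + t * d = 0"
    using ind unfolding independent_pair_def by blast+
  moreover have "s * (a * d - b * c) = d * (s * a + t * c) - c * (s * b + t * d)"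
    "t * (a * d - b * c) = a * (s * b + t * d) - b * (s * a + t * c)"
    by (simp_all add: algebra_simps)
  ultimately have "s * (a * d - b * c) = 0" "t * (a * d - b * c) = 0"
    by simp_all
  then show "s = 0 \<and> t = 0" using det by simp
qed

lemma independent_pair_minor:
  assumes x: "x \<in> carrier_vec k" and y: "y \<in> carrier_vec k" and ind: "independent_pair x y"
  obtains i j where "i < k" "j < k" "x $ i * y $ j - y $ i * x $ j \<noteq> 0"
proof -
  have "x \<noteq> 0\<^sub>v k"
    using independent_pair_lincomb_neq_0[OF x ind, of 1 0] y by auto
  then obtain i where i: "i < k" "x $ i \<noteq> 0" using x by (auto simp: vec_eq_iff)
  define c where "c = y $ i / x $ i"
  have "y - c \<cdot>\<^sub>v x \<noteq> 0\<^sub>v k"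
  proof
    assume "y - c \<cdot>\<^sub>v x = 0\<^sub>v k"
    then have "(- c) \<cdot>\<^sub>v x + 1 \<cdot>\<^sub>v y = 0\<^sub>v k"
      using x y by (auto simp: vec_eq_iff algebra_simps)
    then show False using independent_pair_lincomb_neq_0[OF x ind, of "- c" 1] by simp
  qed
  then obtain j where j: "j < k" "y $ j - c * x $ j \<noteq> 0" using x y by (auto simp: vec_eq_iff)
  have "x $ i * y $ j - y $ i * x $ j = x $ i * (y $ j - c * x $ j)"
    unfolding c_def using i(2) by (simp add: algebra_simps)
  then have "x $ i * y $ j - y $ i * x $ j \<noteq> 0" using i(2) j(2) by simp
  then show thesis using that i(1) j(1) by blast
qed

lemma independent_pair_solvable:
  assumes x: "x \<in> carrier_vec k" and y: "y \<in> carrier_vec k" and ind: "independent_pair x y"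
  obtains a where "a \<in> carrier_vec k" "x \<bullet> a = \<alpha>" "y \<bullet> a = \<beta>"
proof -
  obtain i j where i: "i < k" and j: "j < k" and D: "x $ i * y $ j - y $ i * x $ j \<noteq> 0"
    using independent_pair_minor[OF x y ind] .
  define D where "D = x $ i * y $ j - y $ i * x $ j"
  define p where "p = (\<alpha> * y $ j - \<beta> * x $ j) / D"
  define q where "q = (\<beta> * x $ i - \<alpha> * y $ i) / D"
  \<comment> \<open>Cramer's rule for the 2x2 minor in columns i and j\<close>
  define a where "a = p \<cdot>\<^sub>v unit_vec k i + q \<cdot>\<^sub>v unit_vec k j"
  have "x \<bullet> a = p * x $ i + q * x $ j" "y \<bullet> a = p * y $ i + q * y $ j"
    unfolding a_def using x y i j by (simp_all add: scalar_prod_add_distrib[of _ k])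
  moreover have "p * x $ i + q * x $ j
      = ((\<alpha> * y $ j - \<beta> * x $ j) * x $ i + (\<beta> * x $ i - \<alpha> * y $ i) * x $ j) / D"
    "p * y $ i + q * y $ j
      = ((\<alpha> * y $ j - \<beta> * x $ j) * y $ i + (\<beta> * x $ i - \<alpha> * y $ i) * y $ j) / D"
    unfolding p_def q_def by (simp_all add: add_divide_distrib)
  moreover have "(\<alpha> * y $ j - \<beta> * x $ j) * x $ i + (\<beta> * x $ i - \<alpha> * y $ i) * x $ j = \<alpha> * D"
    "(\<alpha> * y $ j - \<beta> * x $ j) * y $ i + (\<beta> * x $ i - \<alpha> * y $ i) * y $ j = \<beta> * D"
    unfolding D_def by (simp_all add: algebra_simps)
  moreover have "a \<in> carrier_vec k" unfolding a_def by simp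
  ultimately show thesis using that[of a] D unfolding D_def by simp
qed

lemma (in vec_space) independent_pair_of_lin_indpt:
  assumes x: "x \<in> carrier_vec n" and y: "y \<in> carrier_vec n" and "x \<noteq> y"
    and li: "lin_indpt {x, y}"
  shows "independent_pair x y"
  unfolding independent_pair_def
proof (intro allI impI)
  fix s t assume st: "s \<cdot>\<^sub>v x + t \<cdot>\<^sub>v y = 0\<^sub>v (dim_vec x)"
  define a where "a = (\<lambda>v. if v = x then s else t)"
  have "lincomb a {x, y} = s \<cdot>\<^sub>v x + t \<cdot>\<^sub>v y"
    using lincomb_insert2[where S="{y}" and a=a and v=x] lincomb_insert2[where S="{}" and a=a and v=y]
      x y \<open>x \<noteq> y\<close>
    by (auto simp: a_def)
  then have "lincomb a {x, y} = 0\<^sub>v n" using st x by simp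
  then have "a \<in> {x, y} \<rightarrow> {0}"
    using not_lindepD[OF li, of "{x, y}" a] by simp
  then show "s = 0 \<and> t = 0" using \<open>x \<noteq> y\<close> by (auto simp: a_def)
qed

lemma smult_of_not_independent_pair:
  assumes p: "p \<in> carrier_vec n" and q: "q \<in> carrier_vec n" and "p \<noteq> 0\<^sub>v n"
    and "\<not> independent_pair p q"
  obtains \<mu> where "q = \<mu> \<cdot>\<^sub>v p"
proof -
  obtain s t where st: "s \<cdot>\<^sub>v p + t \<cdot>\<^sub>v q = 0\<^sub>v n" "(s, t) \<noteq> (0, 0)"
    using assms(4) p unfolding independent_pair_def by auto
  have comp: "s * p $ i + t * q $ i = 0" if "i < n" for i
    using arg_cong[OF st(1), of "\<lambda>v. v $ i"] that p q by simp
  have "t \<noteq> 0"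
  proof
    assume "t = 0"
    then have "p = 0\<^sub>v n" using comp st(2) p by (auto simp: vec_eq_iff)
    then show False using \<open>p \<noteq> 0\<^sub>v n\<close> by simp
  qed
  have "q = (- s / t) \<cdot>\<^sub>v p"
    using comp \<open>t \<noteq> 0\<close> p q by (auto simp: vec_eq_iff field_simps add_eq_0_iff2)
  then show thesis using that by blast
qed

lemma F3_independent_pair_of_distinct:
  assumes F3: "card (UNIV :: 'a::field set) = 3"
    and p: "p \<in> carrier_vec n" and q: "q \<in> carrier_vec n"
    and "p \<noteq> 0\<^sub>v n" "q \<noteq> 0\<^sub>v n" "p \<noteq> q" "p + q \<noteq> 0\<^sub>v (n :: nat)"
  shows "independent_pair p (p + (q :: 'a vec))"
proof (rule ccontr)
  assume "\<not> independent_pair p (p + q)"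
  then obtain \<mu> where \<mu>: "p + q = \<mu> \<cdot>\<^sub>v p"
    using smult_of_not_independent_pair[OF p add_carrier_vec[OF p q] \<open>p \<noteq> 0\<^sub>v n\<close>] by blast
  have "q $ i = (\<mu> - 1) * p $ i" if "i < n" for i
    using arg_cong[OF \<mu>, of "\<lambda>v. v $ i"] that p q by (simp add: algebra_simps)
  then show False
    using F3_elements(3)[OF F3] assms(4-) p q
    by (cases \<mu> rule: F3_cases[OF F3]) (auto simp: vec_eq_iff algebra_simps)
qed

lemma independent_pair_mult_mat_vec_iff:
  assumes H: "H \<in> carrier_mat n k" and x: "x \<in> carrier_vec k" and y: "y \<in> carrier_vec k"
    and inj: "\<And>v. v \<in> carrier_vec k \<Longrightarrow> H *\<^sub>v v = 0\<^sub>v n \<Longrightarrow> v = 0\<^sub>v k"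
  shows "independent_pair (H *\<^sub>v x) (H *\<^sub>v y) \<longleftrightarrow> independent_pair x y"
proof -
  have "s \<cdot>\<^sub>v (H *\<^sub>v x) + t \<cdot>\<^sub>v (H *\<^sub>v y) = 0\<^sub>v n \<longleftrightarrow> s \<cdot>\<^sub>v x + t \<cdot>\<^sub>v y = 0\<^sub>v k" for s t
  proof -
    have "s \<cdot>\<^sub>v (H *\<^sub>v x) + t \<cdot>\<^sub>v (H *\<^sub>v y) = H *\<^sub>v (s \<cdot>\<^sub>v x + t \<cdot>\<^sub>v y)"
      using H x y by (simp add: mult_add_distrib_mat_vec mult_mat_vec)
    then show ?thesis using inj[of "s \<cdot>\<^sub>v x + t \<cdot>\<^sub>v y"] H x y by auto
  qed
  then show ?thesis unfolding independent_pair_def using H x y by simp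
qed

section \<open>Subspaces of codimension two\<close>

lemma finite_carrier_vec:
  assumes "finite (UNIV :: 'a set)"
  shows "finite (carrier_vec k :: 'a vec set)"
proof -
  have "carrier_vec k \<subseteq> vec_of_list ` {xs :: 'a list. length xs = k}"
    by (auto intro!: image_eqI[of _ _ "list_of_vec v" for v] simp: vec_list)
  moreover have "finite {xs :: 'a list. length xs = k}"
    using finite_lists_length_eq[OF assms] by simp
  ultimately show ?thesis by (meson finite_imageI finite_subset)
qed

lemma (in vectorspace) fin_dim_subspace_of_finite:
  assumes "finite (carrier V)" and "subspace K X V"
  shows "vectorspace.fin_dim K (vs X)"
proof -
  interpret X: vectorspace K "vs X" using assms(2) subspace_is_vs by auto
  have "X \<subseteq> carrier V" using assms(2) unfolding subspace_def submodule_def by auto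
  then have "finite X" using assms(1) finite_subset by blast
  moreover have "X.span X = X" using X.span_is_subset2[of X] X.in_own_span[of X] by auto
  ultimately show ?thesis unfolding X.fin_dim_def by (intro exI[of _ X]) auto
qed

lemma (in vectorspace) subspace_full_dim:
  assumes "fin_dim" and sub: "subspace K X V" and "vectorspace.fin_dim K (vs X)"
    and "vectorspace.dim K (vs X) = dim"
  shows "X = carrier V"
proof -
  interpret X: vectorspace K "vs X" using sub subspace_is_vs by auto
  have sm: "submodule K X V" using sub unfolding subspace_def by auto
  then have XV: "X \<subseteq> carrier V" unfolding submodule_def by auto
  obtain b where b: "finite b" "X.basis b" using X.finite_basis_exists assms(3) by blast
  then have bX: "b \<subseteq> X" unfolding X.basis_def by auto
  have "lin_indpt b"
    using b(2) span_li_not_depend(2)[OF bX sm] unfolding X.basis_def by auto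
  moreover have "card b = dim" using X.dim_basis[OF b] assms(4) by simp
  ultimately have "basis b" using dim_li_is_basis[OF assms(1) b(1)] bX XV by auto
  then have "carrier V \<subseteq> span b" unfolding basis_def by auto
  with span_is_subset[OF bX sm] XV show ?thesis by auto
qed

lemma lin_subspace_dim_subset_eq:
  assumes fin: "finite (UNIV :: 'a::field set)"
    and W: "lin_subspace_dim k d (W :: 'a vec set)" and U: "lin_subspace_dim k d U"
    and "W \<subseteq> U"
  shows "W = U"
proof -
  interpret Vk: vec_space "TYPE('a)" k .
  have subW: "subspace class_ring W Vk.V" and subU: "subspace class_ring U Vk.V"
    using W U unfolding lin_subspace_dim_def by auto
  interpret U: vectorspace class_ring "Vk.vs U" using subU Vk.subspace_is_vs by auto
  note fd = Vk.fin_dim_subspace_of_finite[OF finite_carrier_vec[OF fin]]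
  have "W = carrier (Vk.vs U)"
    using U.subspace_full_dim[OF fd[OF subU] Vk.nested_subspaces[OF subU subW \<open>W \<subseteq> U\<close>]] fd[OF subW]
      W U unfolding lin_subspace_dim_def by simp
  then show ?thesis by simp
qed

lemma rank_nullity_functionals:
  fixes f :: "nat \<Rightarrow> 'a::field vec"
  assumes f: "\<And>j. j < m \<Longrightarrow> f j \<in> carrier_vec k"
  defines "T \<equiv> \<lambda>w. vec m (\<lambda>j. f j \<bullet> w)"
    and "Ker \<equiv> {w \<in> carrier_vec k. \<forall>j<m. f j \<bullet> w = 0}"
  shows "vectorspace.dim class_ring ((module_vec TYPE('a) m)\<lparr>carrier := T ` carrier_vec k\<rparr>)
       + vectorspace.dim class_ring ((module_vec TYPE('a) k)\<lparr>carrier := Ker\<rparr>) = k"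
    and "subspace class_ring Ker (module_vec TYPE('a) k)"
    and "subspace class_ring (T ` carrier_vec k) (module_vec TYPE('a) m)"
proof -
  have "T \<in> LinearCombinations.module_hom class_ring (module_vec TYPE('a) k) (module_vec TYPE('a) m)"
    unfolding LinearCombinations.module_hom_def module_vec_simps T_def
    by (auto intro!: eq_vecI simp: scalar_prod_add_distrib[OF f] scalar_prod_smult_distrib[OF f])
  then interpret L: linear_map class_ring "module_vec TYPE('a) k" "module_vec TYPE('a) m" T
    unfolding linear_map_def mod_hom_def mod_hom_axioms_def using vec_vs vec_module by blast
  interpret Vk: vec_space "TYPE('a)" k .
  have ker: "L.kerT = Ker"
    unfolding L.ker_def unfolding Ker_def module_vec_simps T_def by (auto simp: vec_eq_iff)
  have im: "L.imT = T ` carrier_vec k"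
    unfolding L.im_def module_vec_simps by simp
  have "L.V.dim = k" using Vk.dim_is_n by simp
  then show "vectorspace.dim class_ring ((module_vec TYPE('a) m)\<lparr>carrier := T ` carrier_vec k\<rparr>)
       + vectorspace.dim class_ring ((module_vec TYPE('a) k)\<lparr>carrier := Ker\<rparr>) = k"
    using L.rank_nullity Vk.fin_dim ker im by simp
  show "subspace class_ring Ker (module_vec TYPE('a) k)" using L.kerT_is_subspace ker by simp
  show "subspace class_ring (T ` carrier_vec k) (module_vec TYPE('a) m)"
    using L.imT_is_subspace im by simp
qed

definition annihilator :: "nat \<Rightarrow> 'a::field vec \<Rightarrow> 'a vec \<Rightarrow> 'a vec set" where
  "annihilator k x y = {w \<in> carrier_vec k. x \<bullet> w = 0 \<and> y \<bullet> w = 0}"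

lemma annihilator_dim:
  assumes x: "x \<in> carrier_vec k" and y: "y \<in> carrier_vec k" and ind: "independent_pair x y"
  shows "lin_subspace_dim k (k - 2) (annihilator k x y)" and "2 \<le> k"
proof -
  define f where "f = (\<lambda>j::nat. if j = 0 then x else y)"
  have f: "\<And>j. j < 2 \<Longrightarrow> f j \<in> carrier_vec k" unfolding f_def using x y by auto
  define T where "T = (\<lambda>w. vec 2 (\<lambda>j. f j \<bullet> w))"
  have ker: "{w \<in> carrier_vec k. \<forall>j<2. f j \<bullet> w = 0} = annihilator k x y"
    unfolding f_def annihilator_def by (auto simp: less_2_cases_iff)
  have im: "T ` carrier_vec k = carrier_vec 2"
  proof
    show "carrier_vec 2 \<subseteq> T ` carrier_vec k"
    proof
      fix v :: "'a vec" assume v: "v \<in> carrier_vec 2"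
      obtain a where "a \<in> carrier_vec k" "x \<bullet> a = v $ 0" "y \<bullet> a = v $ 1"
        using independent_pair_solvable[OF x y ind] .
      moreover from this have "T a = v"
        unfolding T_def f_def using v by (intro eq_vecI) (auto simp: less_2_cases_iff)
      ultimately show "v \<in> T ` carrier_vec k" by blast
    qed
  qed (auto simp: T_def)
  have "vectorspace.dim class_ring (module_vec TYPE('a) 2) = 2"
    using vec_space.dim_is_n by metis
  moreover have "(module_vec TYPE('a) 2)\<lparr>carrier := carrier_vec 2\<rparr> = module_vec TYPE('a) 2"
    by (simp add: module_vec_def)
  moreover note rank_nullity_functionals[of 2 f k, OF f, folded T_def, unfolded ker im]
  ultimately have "vectorspace.dim class_ring
      ((module_vec TYPE('a) k)\<lparr>carrier := annihilator k x y\<rparr>) + 2 = k"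
    and "subspace class_ring (annihilator k x y) (module_vec TYPE('a) k)"
    by simp_all
  then show "lin_subspace_dim k (k - 2) (annihilator k x y)" and "2 \<le> k"
    unfolding lin_subspace_dim_def by auto
qed

lemma exists_independent_pair_annihilating:
  fixes f :: "nat \<Rightarrow> 'a::field vec"
  assumes fin: "finite (UNIV :: 'a set)" and f: "\<And>j. j < m \<Longrightarrow> f j \<in> carrier_vec k"
    and mk: "m + 2 \<le> k"
  obtains x y where "x \<in> carrier_vec k" "y \<in> carrier_vec k" "independent_pair x y"
    "\<And>j. j < m \<Longrightarrow> f j \<bullet> x = 0 \<and> f j \<bullet> y = 0"
proof -
  interpret Vk: vec_space "TYPE('a)" k .
  interpret Vm: vec_space "TYPE('a)" m .
  define T where "T = (\<lambda>w. vec m (\<lambda>j. f j \<bullet> w))"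
  define Ker where "Ker = {w \<in> carrier_vec k. \<forall>j<m. f j \<bullet> w = 0}"
  note rn = rank_nullity_functionals[of m f k, OF f, folded T_def Ker_def]
  have "vectorspace.dim class_ring (Vm.vs (T ` carrier_vec k)) \<le> m"
    using Vm.subspace_dim[OF rn(3) Vm.fin_dim
        Vm.fin_dim_subspace_of_finite[OF finite_carrier_vec[OF fin] rn(3)]] Vm.dim_is_n
    by simp
  then have dim_Ker: "2 \<le> vectorspace.dim class_ring (Vk.vs Ker)" using rn(1) mk by linarith
  interpret K: vectorspace class_ring "Vk.vs Ker" using rn(2) Vk.subspace_is_vs by auto
  obtain b where b: "finite b" "K.basis b"
    using K.finite_basis_exists Vk.fin_dim_subspace_of_finite[OF finite_carrier_vec[OF fin] rn(2)]
    by blast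
  have bKer: "b \<subseteq> Ker" using b(2) unfolding K.basis_def by auto
  have "Vk.lin_indpt b"
    using b(2) Vk.span_li_not_depend(2)[OF bKer] rn(2) unfolding K.basis_def subspace_def by auto
  moreover obtain x y where xy: "x \<in> b" "y \<in> b" "x \<noteq> y"
    using K.dim_basis[OF b] dim_Ker card_le_Suc0_iff_eq[OF b(1)] by fastforce
  ultimately have "Vk.lin_indpt {x, y}" using Vk.subset_li_is_li by auto
  moreover have "x \<in> Ker" "y \<in> Ker" using xy bKer by auto
  ultimately show thesis
    using that Vk.independent_pair_of_lin_indpt \<open>x \<noteq> y\<close> unfolding Ker_def by auto
qed

lemma codim2_subspace_eq_annihilator:
  assumes fin: "finite (UNIV :: 'a::field set)" and W: "lin_subspace_dim k d (W :: 'a vec set)"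
    and kd: "d + 2 = k"
  obtains x y where "x \<in> carrier_vec k" "y \<in> carrier_vec k" "independent_pair x y"
    "W = annihilator k x y"
proof -
  interpret Vk: vec_space "TYPE('a)" k .
  have subW: "subspace class_ring W Vk.V" using W unfolding lin_subspace_dim_def by auto
  interpret W: vectorspace class_ring "Vk.vs W" using Vk.subspace_is_vs subW by auto
  obtain b where b: "finite b" "W.basis b"
    using W.finite_basis_exists Vk.fin_dim_subspace_of_finite[OF finite_carrier_vec[OF fin] subW]
    by blast
  have bW: "b \<subseteq> W" using b(2) unfolding W.basis_def by auto
  have smW: "submodule class_ring W Vk.V" using subW unfolding subspace_def by auto
  have WV: "W \<subseteq> carrier_vec k" using smW unfolding submodule_def by auto
  obtain ws where ws: "set ws = b" "distinct ws" using finite_distinct_list[OF b(1)] by blast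
  have "length ws = d"
    using distinct_card[OF ws(2)] ws(1) W.dim_basis[OF b] W unfolding lin_subspace_dim_def by simp
  then have ws_k: "\<And>j. j < d \<Longrightarrow> ws ! j \<in> carrier_vec k" using ws(1) bW WV nth_mem by blast
  obtain x y where x: "x \<in> carrier_vec k" and y: "y \<in> carrier_vec k"
    and ind: "independent_pair x y" and ann: "\<And>j. j < d \<Longrightarrow> ws ! j \<bullet> x = 0 \<and> ws ! j \<bullet> y = 0"
    using exists_independent_pair_annihilating[where f="\<lambda>j. ws ! j" and m=d, OF fin ws_k] kd by auto
  have "b \<subseteq> annihilator k x y"
  proof
    fix w assume "w \<in> b"
    then obtain j where "j < d" "w = ws ! j"
      using ws(1) \<open>length ws = d\<close> by (metis in_set_conv_nth)
    then show "w \<in> annihilator k x y"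
      using ann ws_k x y unfolding annihilator_def by (auto simp: comm_scalar_prod[of _ k])
  qed
  moreover note ann_dim = annihilator_dim[OF x y ind]
  then have "submodule class_ring (annihilator k x y) Vk.V"
    unfolding lin_subspace_dim_def subspace_def by auto
  ultimately have "Vk.span b \<subseteq> annihilator k x y" by (rule Vk.span_is_subset)
  moreover have "Vk.span b = W"
    using b(2) Vk.span_li_not_depend(1)[OF bW smW] unfolding W.basis_def by auto
  ultimately have "W = annihilator k x y"
    using lin_subspace_dim_subset_eq[OF fin W] ann_dim kd by (metis add_diff_cancel_right')
  then show thesis using that x y ind by blast
qed

section \<open>Two-blocking sets\<close>

lemma translate_annihilator:
  assumes a: "a \<in> carrier_vec k" and x: "x \<in> carrier_vec k" and y: "y \<in> carrier_vec k"
  shows "(\<lambda>w. a + w) ` annihilator k x y = {z \<in> carrier_vec k. x \<bullet> z = x \<bullet> a \<and> y \<bullet> z = y \<bullet> a}"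
proof (intro equalityI subsetI)
  fix z assume "z \<in> (\<lambda>w. a + w) ` annihilator k x y"
  then show "z \<in> {z \<in> carrier_vec k. x \<bullet> z = x \<bullet> a \<and> y \<bullet> z = y \<bullet> a}"
    using a x y by (auto simp: annihilator_def scalar_prod_add_distrib[of _ k])
next
  fix z assume z: "z \<in> {z \<in> carrier_vec k. x \<bullet> z = x \<bullet> a \<and> y \<bullet> z = y \<bullet> a}"
  then have "z - a \<in> annihilator k x y"
    using a x y by (auto simp: annihilator_def scalar_prod_minus_distrib[of _ k])
  moreover have "z = a + (z - a)" using z a by auto
  ultimately show "z \<in> (\<lambda>w. a + w) ` annihilator k x y" by blast
qed

lemma affine_codim2_iff_solution_set:
  assumes fin: "finite (UNIV :: 'a::field set)"
  shows "(2 \<le> k \<and> affine_subspace_dim k (k - 2) (A :: 'a vec set)) \<longleftrightarrow>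
    (\<exists>x\<in>carrier_vec k. \<exists>y\<in>carrier_vec k. independent_pair x y \<and>
      (\<exists>\<alpha> \<beta>. A = {z \<in> carrier_vec k. x \<bullet> z = \<alpha> \<and> y \<bullet> z = \<beta>}))"
proof
  assume "2 \<le> k \<and> affine_subspace_dim k (k - 2) A"
  then obtain a W where a: "a \<in> carrier_vec k" and W: "lin_subspace_dim k (k - 2) W"
    and A: "A = (\<lambda>w. a + w) ` W" and k: "k - 2 + 2 = k"
    unfolding affine_subspace_dim_def by auto
  obtain x y where "x \<in> carrier_vec k" "y \<in> carrier_vec k" "independent_pair x y"
    "W = annihilator k x y"
    using codim2_subspace_eq_annihilator[OF fin W k] .
  then show "\<exists>x\<in>carrier_vec k. \<exists>y\<in>carrier_vec k. independent_pair x y \<and>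
      (\<exists>\<alpha> \<beta>. A = {z \<in> carrier_vec k. x \<bullet> z = \<alpha> \<and> y \<bullet> z = \<beta>})"
    using translate_annihilator[OF a] A by blast
next
  assume "\<exists>x\<in>carrier_vec k. \<exists>y\<in>carrier_vec k. independent_pair x y \<and>
      (\<exists>\<alpha> \<beta>. A = {z \<in> carrier_vec k. x \<bullet> z = \<alpha> \<and> y \<bullet> z = \<beta>})"
  then obtain x y \<alpha> \<beta> where x: "x \<in> carrier_vec k" and y: "y \<in> carrier_vec k"
    and ind: "independent_pair x y" and A: "A = {z \<in> carrier_vec k. x \<bullet> z = \<alpha> \<and> y \<bullet> z = \<beta>}"
    by blast
  obtain a where a: "a \<in> carrier_vec k" "x \<bullet> a = \<alpha>" "y \<bullet> a = \<beta>"
    using independent_pair_solvable[OF x y ind] .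
  have "A = (\<lambda>w. a + w) ` annihilator k x y"
    using translate_annihilator[OF a(1) x y] a A by simp
  then show "2 \<le> k \<and> affine_subspace_dim k (k - 2) A"
    using annihilator_dim[OF x y ind] a(1) unfolding affine_subspace_dim_def by blast
qed

lemma two_blocking_set_iff_solvable:
  assumes fin: "finite (UNIV :: 'a::field set)"
  shows "two_blocking_set k (S :: 'a vec set) \<longleftrightarrow> S \<subseteq> carrier_vec k \<and>
    (\<forall>x\<in>carrier_vec k. \<forall>y\<in>carrier_vec k. independent_pair x y \<longrightarrow>
      (\<forall>\<alpha> \<beta>. \<exists>s\<in>S. x \<bullet> s = \<alpha> \<and> y \<bullet> s = \<beta>))"
proof -
  have "(\<forall>d A. d + 2 = k \<and> affine_subspace_dim k d A \<longrightarrow> S \<inter> A \<noteq> {}) \<longleftrightarrow>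
    (\<forall>A. 2 \<le> k \<and> affine_subspace_dim k (k - 2) A \<longrightarrow> S \<inter> A \<noteq> {})"
    by (metis add_diff_cancel_right' le_add2 le_add_diff_inverse2)
  also have "\<dots> \<longleftrightarrow> (\<forall>x\<in>carrier_vec k. \<forall>y\<in>carrier_vec k. independent_pair x y \<longrightarrow>
      (\<forall>\<alpha> \<beta>. S \<inter> {z \<in> carrier_vec k. x \<bullet> z = \<alpha> \<and> y \<bullet> z = \<beta>} \<noteq> {}))"
    unfolding affine_codim2_iff_solution_set[OF fin] by blast
  finally show ?thesis unfolding two_blocking_set_def by blast
qed

definition meets_hyperplanes_off_codim2 :: "nat \<Rightarrow> 'a::field vec set \<Rightarrow> bool" where
  "meets_hyperplanes_off_codim2 k B \<longleftrightarrow>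
     (\<forall>x\<in>carrier_vec k. \<forall>y\<in>carrier_vec k. independent_pair x y \<longrightarrow>
        (\<exists>c\<in>B. x \<bullet> c \<noteq> 0 \<and> y \<bullet> c = 0))"

lemma F3_solvable_of_meets_hyperplanes:
  assumes F3: "card (UNIV :: 'a::field set) = 3" and B: "B \<subseteq> carrier_vec k"
    and meets: "meets_hyperplanes_off_codim2 k B"
    and x: "x \<in> carrier_vec k" and y: "y \<in> carrier_vec k" and ind: "independent_pair x y"
  shows "\<exists>s\<in>{0\<^sub>v k} \<union> B \<union> uminus ` B. x \<bullet> s = \<alpha> \<and> y \<bullet> s = (\<beta> :: 'a)"
proof (cases "(\<alpha>, \<beta>) = (0, 0)")
  case True
  then show ?thesis using x y by auto
next
  case False
  \<comment> \<open>\<open>(\<beta> x - \<alpha> y) \<bullet> c = 0\<close> puts \<open>(x \<bullet> c, y \<bullet> c)\<close> on the line through \<open>(\<alpha>, \<beta>)\<close>,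
    and \<open>(\<alpha> x + \<beta> y) \<bullet> c \<noteq> 0\<close> excludes the origin\<close>
  have "\<alpha> * (- \<alpha>) - \<beta> * \<beta> = - (\<alpha> * \<alpha> + \<beta> * \<beta>)" by (simp add: algebra_simps)
  also have "\<dots> \<noteq> 0" using F3_sum_squares_neq_0[OF F3 False] by (metis neg_equal_0_iff_equal)
  finally have "independent_pair (\<alpha> \<cdot>\<^sub>v x + \<beta> \<cdot>\<^sub>v y) (\<beta> \<cdot>\<^sub>v x + (- \<alpha>) \<cdot>\<^sub>v y)"
    by (rule independent_pair_lincomb[OF x y ind])
  moreover have "\<alpha> \<cdot>\<^sub>v x + \<beta> \<cdot>\<^sub>v y \<in> carrier_vec k" "\<beta> \<cdot>\<^sub>v x + (- \<alpha>) \<cdot>\<^sub>v y \<in> carrier_vec k"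
    using x y by simp_all
  ultimately obtain c where c: "c \<in> B" and
    "(\<alpha> \<cdot>\<^sub>v x + \<beta> \<cdot>\<^sub>v y) \<bullet> c \<noteq> 0" "(\<beta> \<cdot>\<^sub>v x + (- \<alpha>) \<cdot>\<^sub>v y) \<bullet> c = 0"
    using meets unfolding meets_hyperplanes_off_codim2_def by blast
  moreover have ck: "c \<in> carrier_vec k" using c B by auto
  ultimately have "\<alpha> * (x \<bullet> c) + \<beta> * (y \<bullet> c) \<noteq> 0" "\<beta> * (x \<bullet> c) = \<alpha> * (y \<bullet> c)"
    using x y by (simp_all add: add_scalar_prod_distrib[of _ k] algebra_simps)
  then consider "x \<bullet> c = \<alpha>" "y \<bullet> c = \<beta>" | "x \<bullet> c = - \<alpha>" "y \<bullet> c = - \<beta>"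
    using F3_on_line[OF F3] by blast
  then show ?thesis
  proof cases
    case 1
    then show ?thesis using c by blast
  next
    case 2
    then have "x \<bullet> - c = \<alpha>" "y \<bullet> - c = \<beta>"
      using x y ck by (simp_all add: carrier_vecD)
    then show ?thesis using c by blast
  qed
qed

lemma F3_two_blocking_set_iff:
  assumes F3: "card (UNIV :: 'a::field set) = 3" and B: "B \<subseteq> carrier_vec k"
  shows "two_blocking_set k ({0\<^sub>v k} \<union> B \<union> uminus ` (B :: 'a vec set)) \<longleftrightarrow>
    meets_hyperplanes_off_codim2 k B"
proof -
  have fin: "finite (UNIV :: 'a set)" using F3 card.infinite by fastforce
  have S: "{0\<^sub>v k} \<union> B \<union> uminus ` B \<subseteq> carrier_vec k" using B by auto
  show ?thesis
    unfolding two_blocking_set_iff_solvable[OF fin]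
  proof (intro iffI conjI S ballI impI allI)
    assume solvable: "{0\<^sub>v k} \<union> B \<union> uminus ` B \<subseteq> carrier_vec k \<and>
      (\<forall>x\<in>carrier_vec k. \<forall>y\<in>carrier_vec k. independent_pair x y \<longrightarrow>
        (\<forall>\<alpha> \<beta>. \<exists>s\<in>{0\<^sub>v k} \<union> B \<union> uminus ` B. x \<bullet> s = \<alpha> \<and> y \<bullet> s = \<beta>))"
    show "meets_hyperplanes_off_codim2 k B"
      unfolding meets_hyperplanes_off_codim2_def
    proof (intro ballI impI)
      fix x y :: "'a vec"
      assume x: "x \<in> carrier_vec k" and y: "y \<in> carrier_vec k" and "independent_pair x y"
      then obtain s where s: "s \<in> {0\<^sub>v k} \<union> B \<union> uminus ` B" "x \<bullet> s = 1" "y \<bullet> s = 0"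
        using solvable by blast
      have "s \<noteq> 0\<^sub>v k"
      proof
        assume "s = 0\<^sub>v k"
        with s(2) x show False by simp
      qed
      then obtain c where "c \<in> B" "s = c \<or> s = - c" using s(1) by auto
      moreover have "c \<in> carrier_vec k" using \<open>c \<in> B\<close> B by auto
      ultimately have "x \<bullet> c \<noteq> 0 \<and> y \<bullet> c = 0" using s x y by auto
      with \<open>c \<in> B\<close> show "\<exists>c\<in>B. x \<bullet> c \<noteq> 0 \<and> y \<bullet> c = 0" by blast
    qed
  next
    fix x y :: "'a vec" and \<alpha> \<beta> :: 'a
    assume "meets_hyperplanes_off_codim2 k B" "x \<in> carrier_vec k" "y \<in> carrier_vec k"
      "independent_pair x y"
    then show "\<exists>s\<in>{0\<^sub>v k} \<union> B \<union> uminus ` B. x \<bullet> s = \<alpha> \<and> y \<bullet> s = \<beta>"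
      using F3_solvable_of_meets_hyperplanes[OF F3 B] by blast
  qed
qed

section \<open>Trifferent codes\<close>

lemma subspace_vec_closed:
  assumes "subspace class_ring C (module_vec TYPE('a::field) n)"
  shows "C \<subseteq> carrier_vec n" and "0\<^sub>v n \<in> C"
    and "\<And>p q. p \<in> C \<Longrightarrow> q \<in> C \<Longrightarrow> p + q \<in> C" and "\<And>p q. p \<in> C \<Longrightarrow> q \<in> C \<Longrightarrow> p - q \<in> C"
proof -
  have sub: "C \<subseteq> carrier_vec n" and "0\<^sub>v n \<in> C"
    and add: "\<And>p q. p \<in> C \<Longrightarrow> q \<in> C \<Longrightarrow> p + q \<in> C"
    and smult: "\<And>a p. p \<in> C \<Longrightarrow> a \<cdot>\<^sub>v p \<in> C"
    using assms unfolding subspace_def submodule_def module_vec_simps class_ring_simps by auto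
  then show "C \<subseteq> carrier_vec n" and "0\<^sub>v n \<in> C" and "\<And>p q. p \<in> C \<Longrightarrow> q \<in> C \<Longrightarrow> p + q \<in> C"
    by auto
  fix p q assume "p \<in> C" "q \<in> C"
  moreover from this have "p - q = p + (-1) \<cdot>\<^sub>v q" using sub by (auto simp: vec_eq_iff)
  ultimately show "p - q \<in> C" using add smult by simp
qed

lemma F3_trifferent_imp_coordinate:
  assumes F3: "card (UNIV :: 'a::field set) = 3"
    and C: "subspace class_ring C (module_vec TYPE('a) n)" and tri: "trifferent n C"
    and p: "p \<in> C" and q: "q \<in> C" and ind: "independent_pair p q"
  shows "\<exists>i<n. p $ i \<noteq> 0 \<and> q $ i = 0"
proof -
  note closed = subspace_vec_closed[OF C]
  have pn: "p \<in> carrier_vec n" and qn: "q \<in> carrier_vec n" using p q closed(1) by auto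
  have no_relation: "False" if "s \<cdot>\<^sub>v p + t \<cdot>\<^sub>v q = 0\<^sub>v n" "(s, t) \<noteq> (0, 0)" for s t
    using independent_pair_lincomb_neq_0[OF pn ind] that by blast
  \<comment> \<open>a coordinate separating \<open>p\<close>, \<open>q - p\<close> and \<open>0\<close> has \<open>p $ i \<noteq> 0\<close> and \<open>q $ i = 0\<close>\<close>
  have "p \<noteq> q - p"
    using no_relation[of "1 + 1" "-1"] pn qn by (auto simp: vec_eq_iff algebra_simps)
  moreover have "q - p \<noteq> 0\<^sub>v n"
    using no_relation[of "-1" 1] pn qn by (auto simp: vec_eq_iff algebra_simps)
  moreover have "p \<noteq> 0\<^sub>v n"
    using no_relation[of 1 0] pn qn by (auto simp: vec_eq_iff)
  ultimately obtain i where i: "i < n" and "{p $ i, (q - p) $ i, 0\<^sub>v n $ i} = UNIV"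
    using tri p closed(2) closed(4)[OF q p] unfolding trifferent_def by blast
  then have "p $ i \<noteq> 0" "q $ i - p $ i \<noteq> 0" "p $ i \<noteq> q $ i - p $ i"
    using card_3_UNIV_iff_distinct[OF F3] pn qn by auto
  then have "p $ i + (q $ i - p $ i) = 0" by (rule F3_third_element[OF F3])
  then show ?thesis using i \<open>p $ i \<noteq> 0\<close> by auto
qed

lemma F3_trifferent_if_coordinates:
  assumes F3: "card (UNIV :: 'a::field set) = 3"
    and C: "subspace class_ring C (module_vec TYPE('a) n)"
    and separates: "\<And>p q. p \<in> C \<Longrightarrow> q \<in> C \<Longrightarrow> independent_pair p q \<Longrightarrow>
      \<exists>i<n. p $ i \<noteq> 0 \<and> q $ i = 0"
  shows "trifferent n C"
  unfolding trifferent_def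
proof (intro ballI impI)
  note closed = subspace_vec_closed[OF C]
  fix u v w assume u: "u \<in> C" and v: "v \<in> C" and w: "w \<in> C" and "u \<noteq> v \<and> v \<noteq> w \<and> u \<noteq> w"
  moreover define p q where "p = u - w" and "q = v - w"
  moreover have un: "u \<in> carrier_vec n" and vn: "v \<in> carrier_vec n" and wn: "w \<in> carrier_vec n"
    using u v w closed(1) by auto
  ultimately have pq: "p \<noteq> 0\<^sub>v n" "q \<noteq> 0\<^sub>v n" "p \<noteq> q"
    by (auto simp: vec_eq_iff)
  have "\<exists>i<n. p $ i \<noteq> 0 \<and> p $ i + q $ i = 0"
  proof (cases "p + q = 0\<^sub>v n")
    case True
    obtain i where "i < n" "p $ i \<noteq> 0" using pq(1) un wn by (auto simp: p_def vec_eq_iff)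
    then show ?thesis using arg_cong[OF True, of "\<lambda>v. v $ i"] un vn wn by (auto simp: p_def q_def)
  next
    case False
    have "p \<in> C" "q \<in> C" unfolding p_def q_def using closed(4) u v w by auto
    moreover have "independent_pair p (p + q)"
      using F3_independent_pair_of_distinct[OF F3 _ _ pq False] un vn wn by (simp add: p_def q_def)
    ultimately obtain i where "i < n" "p $ i \<noteq> 0" "(p + q) $ i = 0"
      using separates closed(3) by blast
    then show ?thesis using un vn wn by (auto simp: p_def q_def)
  qed
  then obtain i where i: "i < n" "p $ i \<noteq> 0" "p $ i + q $ i = 0" by blast
  moreover from i(3) have "q $ i = - p $ i" by (simp add: eq_neg_iff_add_eq_0 add.commute)
  ultimately have "p $ i \<noteq> q $ i" "q $ i \<noteq> 0" using F3_neq_neg[OF F3] by auto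
  then have "{w $ i + p $ i, w $ i + q $ i, w $ i} = UNIV"
    using card_3_UNIV_iff_distinct[OF F3] i(2) by auto
  then show "\<exists>i<n. {u $ i, v $ i, w $ i} = UNIV"
    using i(1) un vn wn by (auto simp: p_def q_def)
qed

lemma F3_trifferent_iff_coordinates:
  assumes F3: "card (UNIV :: 'a::field set) = 3"
    and C: "subspace class_ring C (module_vec TYPE('a) n)"
  shows "trifferent n C \<longleftrightarrow>
    (\<forall>p\<in>C. \<forall>q\<in>C. independent_pair p q \<longrightarrow> (\<exists>i<n. p $ i \<noteq> 0 \<and> q $ i = 0))"
  using F3_trifferent_imp_coordinate[OF F3 C] F3_trifferent_if_coordinates[OF F3 C] by blast

lemma row_space_eq_image:
  assumes G: "G \<in> carrier_mat k n"
  shows "vec_space.row_space n G = (\<lambda>y. G\<^sup>T *\<^sub>v y) ` carrier_vec k"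
  using vec_space.row_space_eq[OF G] G by auto

lemma subspace_row_space:
  assumes G: "G \<in> carrier_mat k n"
  shows "subspace class_ring (vec_space.row_space n G) (module_vec TYPE('a::field) n)"
proof -
  interpret Vn: vec_space "TYPE('a)" n .
  have "set (rows G) \<subseteq> carrier_vec n" using G by (auto simp: rows_def)
  then show ?thesis using Vn.span_is_subspace unfolding Vn.row_space_def by simp
qed

lemma full_rank_transpose_mult_vec_eq_0:
  fixes G :: "'a::field mat"
  assumes G: "G \<in> carrier_mat k n" and rk: "vec_space.rank k G = k"
    and x: "x \<in> carrier_vec k" and Gx: "G\<^sup>T *\<^sub>v x = 0\<^sub>v n"
  shows "x = 0\<^sub>v k"
proof -
  interpret Vk: vec_space "TYPE('a)" k .
  have cols: "set (cols G) \<subseteq> carrier_vec k" using G by (auto simp: cols_def)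
  have "Vk.col_space G = carrier_vec k"
    unfolding Vk.col_space_def
    by (rule Vk.subspace_full_dim[OF Vk.fin_dim Vk.span_is_subspace[OF cols] Vk.fin_dim_span_cols[OF G]])
      (use rk Vk.dim_is_n in \<open>simp add: Vk.rank_def\<close>)
  show ?thesis
  proof (rule eq_vecI)
    fix j assume "j < dim_vec (0\<^sub>v k)"
    then have j: "j < k" by simp
    then have "unit_vec k j \<in> Vk.col_space G" using \<open>Vk.col_space G = carrier_vec k\<close> by simp
    then obtain z where z: "z \<in> carrier_vec n" "G *\<^sub>v z = unit_vec k j"
      unfolding Vk.col_space_eq[OF G] using G by auto
    have "x $ j = x \<bullet> (G *\<^sub>v z)" using z(2) x j by simp
    also have "\<dots> = (G\<^sup>T *\<^sub>v x) \<bullet> z" using transpose_vec_mult_scalar[OF G z(1) x] by simp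
    finally show "x $ j = 0\<^sub>v k $ j" using Gx z(1) j by simp
  qed (use x in simp)
qed

lemma F3_trifferent_row_space_iff:
  fixes G :: "'a::field mat"
  assumes F3: "card (UNIV :: 'a set) = 3"
    and G: "G \<in> carrier_mat k n" and rk: "vec_space.rank k G = k"
  shows "trifferent n (vec_space.row_space n G) \<longleftrightarrow> meets_hyperplanes_off_codim2 k (set (cols G))"
proof -
  have GT: "G\<^sup>T \<in> carrier_mat n k" using G by simp
  have indep: "independent_pair (G\<^sup>T *\<^sub>v x) (G\<^sup>T *\<^sub>v y) \<longleftrightarrow> independent_pair x y"
    if "x \<in> carrier_vec k" "y \<in> carrier_vec k" for x y
    using independent_pair_mult_mat_vec_iff[OF GT that full_rank_transpose_mult_vec_eq_0[OF G rk]] .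
  have separates: "(\<exists>i<n. (G\<^sup>T *\<^sub>v x) $ i \<noteq> 0 \<and> (G\<^sup>T *\<^sub>v y) $ i = 0) \<longleftrightarrow>
      (\<exists>c\<in>set (cols G). x \<bullet> c \<noteq> 0 \<and> y \<bullet> c = 0)"
    if "x \<in> carrier_vec k" "y \<in> carrier_vec k" for x y
    using that G by (auto simp: cols_def comm_scalar_prod[of _ k])
  have "trifferent n (vec_space.row_space n G) \<longleftrightarrow>
    (\<forall>x\<in>carrier_vec k. \<forall>y\<in>carrier_vec k. independent_pair (G\<^sup>T *\<^sub>v x) (G\<^sup>T *\<^sub>v y) \<longrightarrow>
      (\<exists>i<n. (G\<^sup>T *\<^sub>v x) $ i \<noteq> 0 \<and> (G\<^sup>T *\<^sub>v y) $ i = 0))"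
    using F3_trifferent_iff_coordinates[OF F3 subspace_row_space[OF G]] unfolding row_space_eq_image[OF G]
    by blast
  also have "\<dots> \<longleftrightarrow> meets_hyperplanes_off_codim2 k (set (cols G))"
    unfolding meets_hyperplanes_off_codim2_def by (simp add: indep separates del: index_mult_mat_vec)
  finally show ?thesis .
qed

theorem theorem6p1:
  fixes G :: "'a::field mat" and k n :: nat
  assumes "card (UNIV :: 'a set) = 3"
    and "G \<in> carrier_mat k n"
    and "vec_space.rank k G = k"
  shows "linear_trifferent_code n (vec_space.row_space n G) \<longleftrightarrow>
         two_blocking_set k ({0\<^sub>v k} \<union> set (cols G) \<union> uminus ` set (cols G))"
proof -
  have cols: "set (cols G) \<subseteq> carrier_vec k" using assms(2) by (auto simp: cols_def)
  show ?thesis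
    unfolding linear_trifferent_code_def F3_two_blocking_set_iff[OF assms(1) cols]
      F3_trifferent_row_space_iff[OF assms] using subspace_row_space[OF assms(2)] by blast
qed

end
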